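(* Let $S=\{e_1,\dots,e_k\}\subseteq\mathbb{N}$ be a set of $k\geq1$ distinct elements with $e_k=\max(S)$, and let $b\geq 1$. Then $$\int_{1-\frac1b}^{1}\sqrt{\mathcal{I}(g_S)(t)}\,\mathrm{d}t\leq\frac{2(k+1)e_k}{b}.$$
   Context: $\mathbb{N}=\{0,1,2,\dots\}$. Define $g_S(t)=\sum_{e\in S}t^{2e}$. For a positive twice differentiable function $g$ on an interval contained in $(0,\infty)$, define $\mathcal{I}(g)(t):=(\log g)''(t)+\frac{(\log g)'(t)}{t}$ (this is nonnegative for $g=g_S$). *)

theory Defs
  imports "HOL-Analysis.Analysis"
begin

definition gS :: "nat set \<Rightarrow> real \<Rightarrow> real" where
  "gS S t = (\<Sum>e\<in>S. t ^ (2 * e))"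

definition calI :: "(real \<Rightarrow> real) \<Rightarrow> real \<Rightarrow> real" where
  "calI g t = deriv (deriv (\<lambda>s. ln (g s))) t + deriv (\<lambda>s. ln (g s)) t / t"

end

theory Submission
  imports Defs
begin

text \<open>Writing \<open>A\<^sub>j(t) = \<Sum>\<^sub>e e\<^sup>j t\<^sup>2\<^sup>e\<close>, one computes
  \<open>\<I>(g\<^sub>S)(t) = 4 (A\<^sub>2A\<^sub>0 - A\<^sub>1\<^sup>2) / (t A\<^sub>0)\<^sup>2\<close>: four times the variance of \<open>e\<close> under the
  weights \<open>t\<^sup>2\<^sup>e\<close>, divided by \<open>t\<^sup>2\<close>. The variance is at most the second moment about
  \<open>m = min S\<close>, and since \<open>A\<^sub>0 \<ge> t\<^sup>2\<^sup>m\<close> this is at most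
  \<open>\<Sum>\<^sub>e ((e-m) t\<^sup>e\<^sup>-\<^sup>m)\<^sup>2 \<le> (\<Sum>\<^sub>e (e-m) t\<^sup>e\<^sup>-\<^sup>m)\<^sup>2\<close>. Hence \<open>\<surd>\<I>(g\<^sub>S)\<close> is dominated by
  the derivative of \<open>H(t) = 2 \<Sum>\<^sub>e t\<^sup>e\<^sup>-\<^sup>m\<close>, and the integral over \<open>[1 - 1/b, 1]\<close> is
  at most \<open>H(1) - H(1 - 1/b) \<le> 2 \<Sum>\<^sub>e (e-m)/b\<close> by Bernoulli's inequality.\<close>

lemma sum_power2_le_power2_sum:
  fixes x :: "'a \<Rightarrow> 'b::linordered_idom"
  assumes "finite S" "\<And>e. e \<in> S \<Longrightarrow> 0 \<le> x e"
  shows "(\<Sum>e\<in>S. (x e)\<^sup>2) \<le> (\<Sum>e\<in>S. x e)\<^sup>2"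
  using assms
proof (induction S rule: finite_induct)
  case (insert a F)
  have "0 \<le> 2 * x a * (\<Sum>e\<in>F. x e)"
    using insert.prems by (intro mult_nonneg_nonneg sum_nonneg) auto
  with insert show ?case by (simp add: power2_eq_square algebra_simps)
qed simp

lemma sum_weighted_square_shift:
  fixes w x :: "'a \<Rightarrow> real"
  shows "(\<Sum>e\<in>S. w e) * (\<Sum>e\<in>S. w e * (x e - c)\<^sup>2)
    = (\<Sum>e\<in>S. w e * (x e)\<^sup>2) * (\<Sum>e\<in>S. w e) - (\<Sum>e\<in>S. w e * x e)\<^sup>2
      + ((\<Sum>e\<in>S. w e * x e) - c * (\<Sum>e\<in>S. w e))\<^sup>2"
proof -
  have "(\<Sum>e\<in>S. w e * (x e - c)\<^sup>2)
      = (\<Sum>e\<in>S. w e * (x e)\<^sup>2 - 2 * c * (w e * x e) + c\<^sup>2 * w e)"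
    by (rule sum.cong) (simp_all add: power2_eq_square algebra_simps)
  also have "\<dots>
      = (\<Sum>e\<in>S. w e * (x e)\<^sup>2) - 2 * c * (\<Sum>e\<in>S. w e * x e) + c\<^sup>2 * (\<Sum>e\<in>S. w e)"
    by (simp add: sum.distrib sum_subtractf sum_distrib_left)
  finally have expand: "(\<Sum>e\<in>S. w e * (x e - c)\<^sup>2)
      = (\<Sum>e\<in>S. w e * (x e)\<^sup>2) - 2 * c * (\<Sum>e\<in>S. w e * x e) + c\<^sup>2 * (\<Sum>e\<in>S. w e)" .
  show ?thesis
    unfolding expand by (simp add: power2_eq_square algebra_simps)
qed

lemma weighted_variance_le:
  fixes w x :: "'a \<Rightarrow> real"
  assumes "0 < (\<Sum>e\<in>S. w e)"
  shows "(\<Sum>e\<in>S. w e * (x e)\<^sup>2) * (\<Sum>e\<in>S. w e) - (\<Sum>e\<in>S. w e * x e)\<^sup>2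
    \<le> (\<Sum>e\<in>S. w e) * (\<Sum>e\<in>S. w e * (x e - c)\<^sup>2)"
  unfolding sum_weighted_square_shift by simp

lemma weighted_variance_nonneg:
  fixes w x :: "'a \<Rightarrow> real"
  assumes "0 < (\<Sum>e\<in>S. w e)" "\<And>e. e \<in> S \<Longrightarrow> 0 \<le> w e"
  shows "0 \<le> (\<Sum>e\<in>S. w e * (x e)\<^sup>2) * (\<Sum>e\<in>S. w e) - (\<Sum>e\<in>S. w e * x e)\<^sup>2"
proof -
  let ?c = "(\<Sum>e\<in>S. w e * x e) / (\<Sum>e\<in>S. w e)"
  have "0 \<le> (\<Sum>e\<in>S. w e) * (\<Sum>e\<in>S. w e * (x e - ?c)\<^sup>2)"
    using assms by (intro mult_nonneg_nonneg sum_nonneg) auto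
  then show ?thesis
    unfolding sum_weighted_square_shift using assms(1) by simp
qed

definition gS_moment :: "nat set \<Rightarrow> nat \<Rightarrow> real \<Rightarrow> real" where
  "gS_moment S j t = (\<Sum>e\<in>S. t ^ (2 * e) * real e ^ j)"

lemma gS_eq_gS_moment_0: "gS S = gS_moment S 0"
  by (simp add: fun_eq_iff gS_def gS_moment_def)

lemma gS_moment_0_pos:
  assumes "finite S" "S \<noteq> {}" "t \<noteq> 0"
  shows "0 < gS_moment S 0 t"
  unfolding gS_moment_def using assms by (intro sum_pos) (auto simp: zero_less_power_eq)

lemma Min_term_le_gS_moment_0:
  assumes "finite S" "S \<noteq> {}"
  shows "t ^ (2 * Min S) \<le> gS_moment S 0 t"
  unfolding gS_moment_def
  using member_le_sum[of "Min S" S "\<lambda>e. t ^ (2 * e) * real e ^ 0"] assms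
  by (simp add: zero_le_power_eq)

lemma has_real_derivative_gS_moment:
  assumes "t \<noteq> 0"
  shows "(gS_moment S j has_real_derivative 2 * gS_moment S (Suc j) t / t) (at t)"
proof -
  have "(gS_moment S j has_real_derivative
      (\<Sum>e\<in>S. real (2 * e) * t ^ (2 * e - Suc 0) * real e ^ j)) (at t)"
    unfolding gS_moment_def[abs_def] by (intro DERIV_sum DERIV_cmult_right DERIV_pow)
  moreover have "real (2 * e) * t ^ (2 * e - Suc 0) * real e ^ j
      = 2 * (t ^ (2 * e) * real e ^ Suc j) / t" for e
    using assms by (cases e) simp_all
  ultimately show ?thesis
    by (simp add: gS_moment_def sum_divide_distrib sum_distrib_left)
qed

lemma calI_gS_eq:
  assumes S: "finite S" "S \<noteq> {}" and "t \<noteq> 0"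
  shows "calI (gS S) t = 4 * (gS_moment S 2 t * gS_moment S 0 t - (gS_moment S 1 t)\<^sup>2)
    / (t * gS_moment S 0 t)\<^sup>2"
proof -
  define L where "L s = 2 * gS_moment S 1 s / (s * gS_moment S 0 s)" for s
  have deriv_ln_gS: "deriv (\<lambda>s. ln (gS S s)) s = L s" if "s \<noteq> 0" for s
  proof (rule DERIV_imp_deriv)
    show "((\<lambda>s. ln (gS S s)) has_real_derivative L s) (at s)"
      using DERIV_chain2[OF DERIV_ln_divide[OF gS_moment_0_pos[OF S that]]
          has_real_derivative_gS_moment[OF that, of S 0]]
      by (simp add: gS_eq_gS_moment_0 L_def mult.commute)
  qed
  have A0: "0 < gS_moment S 0 t"
    using gS_moment_0_pos[OF S \<open>t \<noteq> 0\<close>] .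
  have "(L has_real_derivative
      (4 * gS_moment S 2 t * gS_moment S 0 t - 2 * gS_moment S 1 t * gS_moment S 0 t
        - 4 * (gS_moment S 1 t)\<^sup>2) / (t * gS_moment S 0 t)\<^sup>2) (at t)"
  proof -
    have num: "((\<lambda>s. 2 * gS_moment S 1 s) has_real_derivative 2 * (2 * gS_moment S 2 t / t)) (at t)"
      using DERIV_cmult[OF has_real_derivative_gS_moment[OF \<open>t \<noteq> 0\<close>, of S 1], of 2]
      by (simp add: numeral_2_eq_2)
    have den: "((\<lambda>s. s * gS_moment S 0 s) has_real_derivative
        1 * gS_moment S 0 t + t * (2 * gS_moment S 1 t / t)) (at t)"
      using DERIV_mult[OF DERIV_ident has_real_derivative_gS_moment[OF \<open>t \<noteq> 0\<close>, of S 0]]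
      by simp
    have quotient_rule_simplified:
      "(2 * (2 * a2 / t) * (t * a0) - 2 * a1 * (1 * a0 + t * (2 * a1 / t))) / ((t * a0) * (t * a0))
        = (4 * a2 * a0 - 2 * a1 * a0 - 4 * a1\<^sup>2) / (t * a0)\<^sup>2" for a0 a1 a2 :: real
      using \<open>t \<noteq> 0\<close> by (simp add: field_simps power2_eq_square)
    show ?thesis
      unfolding L_def[abs_def] quotient_rule_simplified[symmetric]
      by (rule DERIV_divide[OF num den]) (use \<open>t \<noteq> 0\<close> A0 in simp)
  qed
  then have "(deriv (\<lambda>s. ln (gS S s)) has_real_derivative
      (4 * gS_moment S 2 t * gS_moment S 0 t - 2 * gS_moment S 1 t * gS_moment S 0 t
        - 4 * (gS_moment S 1 t)\<^sup>2) / (t * gS_moment S 0 t)\<^sup>2) (at t)"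
    by (rule has_field_derivative_transform_within_open[where S = "- {0}"])
      (use \<open>t \<noteq> 0\<close> deriv_ln_gS in auto)
  then show ?thesis
    unfolding calI_def deriv_ln_gS[OF \<open>t \<noteq> 0\<close>] L_def
    using \<open>t \<noteq> 0\<close> A0 by (simp add: DERIV_imp_deriv field_simps power2_eq_square)
qed

lemma calI_gS_nonneg:
  assumes S: "finite S" "S \<noteq> {}" and "t \<noteq> 0"
  shows "0 \<le> calI (gS S) t"
proof -
  have "0 \<le> gS_moment S 2 t * gS_moment S 0 t - (gS_moment S 1 t)\<^sup>2"
    using weighted_variance_nonneg[of "\<lambda>e. t ^ (2 * e)" S real] gS_moment_0_pos[OF assms]
    by (simp add: gS_moment_def zero_le_power_eq)
  then show ?thesis
    unfolding calI_gS_eq[OF assms] by simp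
qed

definition power_sum_from_Min :: "nat set \<Rightarrow> real \<Rightarrow> real" where
  "power_sum_from_Min S t = (\<Sum>e\<in>S. t ^ (e - Min S))"

definition power_sum_from_Min' :: "nat set \<Rightarrow> real \<Rightarrow> real" where
  "power_sum_from_Min' S t = (\<Sum>e\<in>S. real (e - Min S) * t ^ (e - Min S - 1))"

lemma has_real_derivative_power_sum_from_Min:
  "(power_sum_from_Min S has_real_derivative power_sum_from_Min' S t) (at t)"
  unfolding power_sum_from_Min_def[abs_def] power_sum_from_Min'_def
  by (intro DERIV_sum DERIV_pow[THEN DERIV_cong]) simp

lemma power_sum_from_Min'_nonneg: "0 \<le> t \<Longrightarrow> 0 \<le> power_sum_from_Min' S t"
  unfolding power_sum_from_Min'_def by (intro sum_nonneg) simp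

lemma second_moment_about_Min_le:
  assumes "finite S" "S \<noteq> {}" "0 \<le> t"
  shows "(\<Sum>e\<in>S. t ^ (2 * e) * (real e - real (Min S))\<^sup>2)
    \<le> t ^ (2 * Min S) * (t * power_sum_from_Min' S t)\<^sup>2"
proof -
  let ?m = "Min S"
  have "t ^ (2 * e) * (real e - real ?m)\<^sup>2 = t ^ (2 * ?m) * (real (e - ?m) * t ^ (e - ?m))\<^sup>2"
    if "e \<in> S" for e
  proof -
    have "?m \<le> e" using assms that by simp
    then have "2 * e = 2 * ?m + (e - ?m) * 2" by simp
    then have "t ^ (2 * e) = t ^ (2 * ?m) * (t ^ (e - ?m))\<^sup>2"
      by (simp only: power_add power_mult)
    with \<open>?m \<le> e\<close> show ?thesis
      by (simp add: of_nat_diff power_mult_distrib)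
  qed
  then have "(\<Sum>e\<in>S. t ^ (2 * e) * (real e - real ?m)\<^sup>2)
      = t ^ (2 * ?m) * (\<Sum>e\<in>S. (real (e - ?m) * t ^ (e - ?m))\<^sup>2)"
    by (simp add: sum_distrib_left)
  also have "\<dots> \<le> t ^ (2 * ?m) * (\<Sum>e\<in>S. real (e - ?m) * t ^ (e - ?m))\<^sup>2"
    using assms by (intro mult_left_mono sum_power2_le_power2_sum) auto
  also have "(\<Sum>e\<in>S. real (e - ?m) * t ^ (e - ?m)) = t * power_sum_from_Min' S t"
    unfolding power_sum_from_Min'_def sum_distrib_left
  proof (intro sum.cong refl)
    fix e
    show "real (e - ?m) * t ^ (e - ?m) = t * (real (e - ?m) * t ^ (e - ?m - 1))"
      by (cases "e - ?m") simp_all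
  qed
  finally show ?thesis .
qed

lemma calI_gS_le:
  assumes S: "finite S" "S \<noteq> {}" and "0 < t"
  shows "calI (gS S) t \<le> (2 * power_sum_from_Min' S t)\<^sup>2"
proof -
  let ?A = "\<lambda>j. gS_moment S j t" and ?P = "t * power_sum_from_Min' S t"
  have A0: "0 < ?A 0" using gS_moment_0_pos[OF S] \<open>0 < t\<close> by simp
  have "?A 2 * ?A 0 - (?A 1)\<^sup>2
      \<le> ?A 0 * (\<Sum>e\<in>S. t ^ (2 * e) * (real e - real (Min S))\<^sup>2)"
    using weighted_variance_le[of "\<lambda>e. t ^ (2 * e)" S real "real (Min S)"] A0
    by (simp add: gS_moment_def)
  also have "\<dots> \<le> ?A 0 * (t ^ (2 * Min S) * ?P\<^sup>2)"
    using second_moment_about_Min_le[OF S] \<open>0 < t\<close> A0 by (simp add: mult_left_mono)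
  also have "\<dots> \<le> ?A 0 * (?A 0 * ?P\<^sup>2)"
    using Min_term_le_gS_moment_0[OF S] A0 by (simp add: mult_right_mono)
  finally have "calI (gS S) t \<le> 4 * (?A 0 * (?A 0 * ?P\<^sup>2)) / (t * ?A 0)\<^sup>2"
    unfolding calI_gS_eq[OF S \<open>0 < t\<close>[THEN less_imp_neq, symmetric]]
    by (simp add: divide_right_mono)
  also have "\<dots> = (2 * power_sum_from_Min' S t)\<^sup>2"
    using A0 \<open>0 < t\<close> by (simp add: field_simps power2_eq_square)
  finally show ?thesis .
qed

lemma sqrt_calI_gS_le:
  assumes "finite S" "S \<noteq> {}" and "0 < t"
  shows "sqrt (calI (gS S) t) \<le> 2 * power_sum_from_Min' S t"
  using real_le_lsqrt calI_gS_le[OF assms] power_sum_from_Min'_nonneg \<open>0 < t\<close> by simp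

lemma continuous_on_gS_moment: "continuous_on X (gS_moment S j)"
  unfolding gS_moment_def[abs_def] by (intro continuous_intros)

lemma continuous_on_sqrt_calI_gS:
  assumes S: "finite S" "S \<noteq> {}"
  shows "continuous_on (- {0}) (\<lambda>t. sqrt (calI (gS S) t))"
proof -
  have "continuous_on (- {0}) (\<lambda>t. sqrt (4 * (gS_moment S 2 t * gS_moment S 0 t
      - (gS_moment S 1 t)\<^sup>2) / (t * gS_moment S 0 t)\<^sup>2))"
    using gS_moment_0_pos[OF S]
    by (intro continuous_intros continuous_on_gS_moment) force
  then show ?thesis
    by (rule continuous_on_cong[THEN iffD1, rotated 2]) (simp_all add: calI_gS_eq[OF S])
qed

lemma integrable_on_integral_le_continuous_majorant:
  fixes f g :: "real \<Rightarrow> real"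
  assumes "negligible N" and "continuous_on ({a..b} - N) f" and "continuous_on {a..b} g"
    and "\<And>t. t \<in> {a..b} - N \<Longrightarrow> 0 \<le> f t \<and> f t \<le> g t"
  shows "f integrable_on {a..b} \<and> integral {a..b} f \<le> integral {a..b} g"
proof -
  let ?T = "{a..b} - N"
  have spike: "negligible {x \<in> {a..b} - ?T. h x \<noteq> 0}" "negligible {x \<in> ?T - {a..b}. h x \<noteq> 0}"
    for h :: "real \<Rightarrow> real"
    by (auto intro: negligible_subset[OF assms(1)])
  have T: "?T \<in> sets lebesgue"
    using negligible_imp_sets[OF assms(1)] by auto
  have g: "g integrable_on ?T"
    using integrable_continuous_interval[OF assms(3)] by (rule integrable_spike_set[OF _ spike])
  have f: "f integrable_on ?T"
    by (rule measurable_bounded_by_integrable_imp_integrable_real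
        [OF continuous_imp_measurable_on_sets_lebesgue[OF assms(2) T] g _ T])
      (use assms(4) in auto)
  have "f integrable_on {a..b}"
    by (rule integrable_spike_set[OF f]) (use spike in auto)
  moreover have "integral {a..b} f \<le> integral {a..b} g"
    using integral_le[OF f g] assms(4) integral_spike_set[OF spike] by auto
  ultimately show ?thesis ..
qed

lemma integral_power_sum_from_Min':
  assumes "a \<le> b"
  shows "integral {a..b} (power_sum_from_Min' S) = power_sum_from_Min S b - power_sum_from_Min S a"
proof (rule integral_unique, rule fundamental_theorem_of_calculus[OF assms])
  fix t
  show "(power_sum_from_Min S has_vector_derivative power_sum_from_Min' S t) (at t within {a..b})"
    unfolding has_real_derivative_iff_has_vector_derivative[symmetric]
    by (rule has_field_derivative_at_within[OF has_real_derivative_power_sum_from_Min])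
qed

lemma power_sum_from_Min_increment_le:
  assumes "finite S" "0 \<le> x" "x \<le> 1"
  shows "power_sum_from_Min S 1 - power_sum_from_Min S (1 - x) \<le> real (card S) * (real (Max S) * x)"
  unfolding power_sum_from_Min_def sum_subtractf[symmetric]
proof (rule sum_bounded_above)
  fix e assume "e \<in> S"
  have "1 + real (e - Min S) * - x \<le> (1 + - x) ^ (e - Min S)"
    using assms by (intro Bernoulli_inequality) simp
  moreover have "real (e - Min S) * x \<le> real (Max S) * x"
    using Max_ge[OF assms(1) \<open>e \<in> S\<close>] assms by (intro mult_right_mono) auto
  ultimately show "1 ^ (e - Min S) - (1 - x) ^ (e - Min S) \<le> real (Max S) * x"
    by simp
qed

theorem lemma6p1:
  fixes S :: "nat set" and b :: real
  assumes "finite S" and "S \<noteq> {}" and "b \<ge> 1"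
  shows "(\<lambda>t. sqrt (calI (gS S) t)) integrable_on {1 - 1/b..1}
    \<and> integral {1 - 1/b..1} (\<lambda>t. sqrt (calI (gS S) t))
        \<le> 2 * (real (card S) + 1) * real (Max S) / b"
proof -
  note S = assms(1,2)
  have x: "0 \<le> 1/b" "1/b \<le> 1" using assms(3) by auto
  \<comment> \<open>For \<open>b = 1\<close> the interval contains \<open>t = 0\<close>, where \<open>calI\<close> is a junk value;
    it is discarded as a null set.\<close>
  have majorant: "0 \<le> sqrt (calI (gS S) t) \<and> sqrt (calI (gS S) t) \<le> 2 * power_sum_from_Min' S t"
    if "t \<in> {1 - 1/b..1} - {0}" for t
    using that x sqrt_calI_gS_le[OF S] calI_gS_nonneg[OF S] by auto
  have "continuous_on {1 - 1/b..1} (\<lambda>t. 2 * power_sum_from_Min' S t)"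
    unfolding power_sum_from_Min'_def by (intro continuous_intros)
  then have dominated: "(\<lambda>t. sqrt (calI (gS S) t)) integrable_on {1 - 1/b..1}
      \<and> integral {1 - 1/b..1} (\<lambda>t. sqrt (calI (gS S) t))
        \<le> integral {1 - 1/b..1} (\<lambda>t. 2 * power_sum_from_Min' S t)"
    using integrable_on_integral_le_continuous_majorant[OF negligible_sing
        continuous_on_subset[OF continuous_on_sqrt_calI_gS[OF S]] _ majorant]
    by auto
  then have "integral {1 - 1/b..1} (\<lambda>t. sqrt (calI (gS S) t))
      \<le> integral {1 - 1/b..1} (\<lambda>t. 2 * power_sum_from_Min' S t)" ..
  also have "\<dots> = 2 * (power_sum_from_Min S 1 - power_sum_from_Min S (1 - 1/b))"
    using x integral_power_sum_from_Min'[of "1 - 1/b" 1 S] by simp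
  also have "\<dots> \<le> 2 * (real (card S) * (real (Max S) * (1/b)))"
    using power_sum_from_Min_increment_le[OF assms(1) x] by simp
  also have "\<dots> \<le> 2 * (real (card S) + 1) * real (Max S) / b"
    using assms(3) by (simp add: field_simps)
  finally show ?thesis using dominated by simp
qed

end
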